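(* Let $R$ be a commutative ring, $M$ an $R$-module, and $a\in M^{{\mathbb N}}$ an $R$-recurrence sequence of order $d$. If $a(k)=a(k+m)=a(k+2m)=\cdots=a(k+(d-1)m)=0$ for some $k\in{\mathbb N}$ and some positive integer $m$, then $a(k+im)=0$ for all $i\in{\mathbb N}$.
   Context: ${\mathbb N}=\{0,1,2,\dots\}$. $a\in M^{{\mathbb N}}$ is an $R$-recurrence sequence of order $d$ if $d$ is the smallest integer $\ge0$ for which there are $\gamma_0,\dots,\gamma_{d-1}\in R$ with $a(n+d)=\gamma_{d-1}a(n+d-1)+\cdots+\gamma_0a(n)$ for all $n\in{\mathbb N}$. *)

theory Defs
  imports Main "HOL.Modules"
begin

definition satisfies_rec_of_length ::
  "('r::comm_ring_1 \<Rightarrow> 'm::ab_group_add \<Rightarrow> 'm) \<Rightarrow> (nat \<Rightarrow> 'm) \<Rightarrow> nat \<Rightarrow> bool" where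
  "satisfies_rec_of_length scale a d \<longleftrightarrow>
     (\<exists>\<gamma> :: nat \<Rightarrow> 'r. \<forall>n. a (n + d) = (\<Sum>i<d. scale (\<gamma> i) (a (n + i))))"

definition is_recurrence_of_order ::
  "('r::comm_ring_1 \<Rightarrow> 'm::ab_group_add \<Rightarrow> 'm) \<Rightarrow> (nat \<Rightarrow> 'm) \<Rightarrow> nat \<Rightarrow> bool" where
  "is_recurrence_of_order scale a d \<longleftrightarrow>
     satisfies_rec_of_length scale a d \<and> (\<forall>e<d. \<not> satisfies_rec_of_length scale a e)"

end

theory Submission imports Defs "Jordan_Normal_Form.Char_Poly" begin

(* The shifts a(n + l), l < d, span every shift a(n + t) over R, so
   a(n + j + m) = (\<Sum>l<d. A j l * a(n + l)) for a d \<times> d matrix A over R.  Let polynomials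
   act on sequences through the m-step shift E^m.  Then the matrix X I - A, applied to the
   vector of shifts of a, gives zero; multiplying by its adjugate shows that the
   characteristic polynomial of A annihilates a.  As this polynomial is monic of degree d,
   every arithmetic subsequence a(k + i m) satisfies a recurrence of length d, and a
   sequence with such a recurrence that vanishes at its first d terms vanishes. *)

(* Otherwise HOL-Algebra's module, imported with Jordan_Normal_Form, captures the name
   "module" in the statement of the theorem. *)
hide_const (open) Module.module

(* p(E^m) b, where E is the shift operator on sequences *)
definition shift_eval ::
  "('r::comm_ring_1 \<Rightarrow> 'm::ab_group_add \<Rightarrow> 'm) \<Rightarrow> nat \<Rightarrow> 'r poly \<Rightarrow> (nat \<Rightarrow> 'm) \<Rightarrow> nat \<Rightarrow> 'm"
  where "shift_eval scale m p b n = (\<Sum>i\<le>degree p. scale (coeff p i) (b (n + i * m)))"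

context Modules.module
begin

lemma shift_eval_eq_sum_lessThan:
  assumes "degree p < N"
  shows "shift_eval scale m p b n = (\<Sum>i<N. scale (coeff p i) (b (n + i * m)))"
  unfolding shift_eval_def
  by (rule sum.mono_neutral_left) (use assms in \<open>auto simp: coeff_eq_0\<close>)

lemma shift_eval_0 [simp]: "shift_eval scale m 0 b n = 0"
  by (simp add: shift_eval_def)

lemma shift_eval_add:
  "shift_eval scale m (p + q) b n = shift_eval scale m p b n + shift_eval scale m q b n"
proof -
  define N where "N = Suc (max (degree p) (degree q))"
  have "degree (p + q) < N"
    unfolding N_def using degree_add_le_max[of p q] by linarith
  then show ?thesis
    by (subst (1 2 3) shift_eval_eq_sum_lessThan[where N = N])
      (auto simp: N_def scale_left_distrib sum.distrib)
qed

lemma shift_eval_sum: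
  "shift_eval scale m (\<Sum>j\<in>J. p j) b n = (\<Sum>j\<in>J. shift_eval scale m (p j) b n)"
  by (induction J rule: infinite_finite_induct) (auto simp: shift_eval_add)

lemma shift_eval_pCons:
  "shift_eval scale m (pCons c p) b n = scale c (b n) + shift_eval scale m p b (n + m)"
proof -
  have "degree (pCons c p) < Suc (Suc (degree p))"
    using degree_pCons_le[of c p] by linarith
  then have "shift_eval scale m (pCons c p) b n
      = (\<Sum>i<Suc (Suc (degree p)). scale (coeff (pCons c p) i) (b (n + i * m)))"
    by (rule shift_eval_eq_sum_lessThan)
  also have "\<dots> = scale c (b n) + (\<Sum>i<Suc (degree p). scale (coeff p i) (b (n + m + i * m)))"
    by (subst sum.lessThan_Suc_shift) (simp add: add.assoc)
  also have "\<dots> = scale c (b n) + shift_eval scale m p b (n + m)"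
    by (simp only: shift_eval_def lessThan_Suc_atMost)
  finally show ?thesis .
qed

lemma shift_eval_smult:
  "shift_eval scale m (Polynomial.smult c p) b n = scale c (shift_eval scale m p b n)"
proof -
  have "degree (Polynomial.smult c p) < Suc (degree p)"
    using degree_smult_le[of c p] by linarith
  then show ?thesis
    by (simp add: shift_eval_eq_sum_lessThan[where N = "Suc (degree p)"]
        scale_sum_right scale_scale del: sum.lessThan_Suc)
qed

lemma shift_eval_mult:
  "shift_eval scale m (p * q) b n = shift_eval scale m p (shift_eval scale m q b) n"
  by (induction p arbitrary: n rule: pCons_induct)
    (simp_all add: mult_pCons_left shift_eval_add shift_eval_smult shift_eval_pCons)

lemma shift_eval_sum_seq:
  "shift_eval scale m p (\<lambda>n. \<Sum>j\<in>J. b j n) n = (\<Sum>j\<in>J. shift_eval scale m p (b j) n)"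
  unfolding shift_eval_def by (simp add: scale_sum_right sum.swap[of _ J])

lemma shift_eval_zero_seq: "shift_eval scale m p (\<lambda>_. 0) n = 0"
  unfolding shift_eval_def by simp

(* Cramer's rule: multiply the system by the adjugate of B. *)
lemma shift_eval_det_annihilates:
  assumes B: "B \<in> carrier_mat d d"
    and system: "\<And>j n. j < d \<Longrightarrow> (\<Sum>l<d. shift_eval scale m (B $$ (j, l)) (b l) n) = 0"
    and "l0 < d"
  shows "shift_eval scale m (det B) (b l0) n = 0"
proof -
  let ?C = "adj_mat B"
  have C: "?C \<in> carrier_mat d d"
    using adj_mat(1)[OF B] .
  have adj_entry: "(\<Sum>j<d. ?C $$ (l0, j) * B $$ (j, l)) = (if l = l0 then det B else 0)"
    if "l < d" for l
  proof -
    have "(\<Sum>j<d. ?C $$ (l0, j) * B $$ (j, l)) = (?C * B) $$ (l0, l)"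
      using B C \<open>l0 < d\<close> that by (simp add: scalar_prod_def lessThan_atLeast0)
    also have "\<dots> = (if l = l0 then det B else 0)"
      using adj_mat(3)[OF B] \<open>l0 < d\<close> that by simp
    finally show ?thesis .
  qed
  have "shift_eval scale m (det B) (b l0) n
      = (\<Sum>l<d. if l = l0 then shift_eval scale m (det B) (b l) n else 0)"
    using \<open>l0 < d\<close> by simp
  also have "\<dots> = (\<Sum>l<d. shift_eval scale m (if l = l0 then det B else 0) (b l) n)"
    by (rule sum.cong) simp_all
  also have "\<dots> = (\<Sum>l<d. \<Sum>j<d.
      shift_eval scale m (?C $$ (l0, j)) (shift_eval scale m (B $$ (j, l)) (b l)) n)"
    by (rule sum.cong) (simp_all add: adj_entry[symmetric] shift_eval_sum shift_eval_mult)
  also have "\<dots> = (\<Sum>j<d. \<Sum>l<d.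
      shift_eval scale m (?C $$ (l0, j)) (shift_eval scale m (B $$ (j, l)) (b l)) n)"
    by (rule sum.swap)
  also have "\<dots> = (\<Sum>j<d. shift_eval scale m (?C $$ (l0, j))
      (\<lambda>n'. \<Sum>l<d. shift_eval scale m (B $$ (j, l)) (b l) n') n)"
    by (simp only: shift_eval_sum_seq)
  also have "\<dots> = 0"
    by (simp add: system shift_eval_zero_seq)
  finally show ?thesis .
qed

lemma recurrence_shift_combination:
  fixes t :: nat
  assumes rec: "\<forall>n. a (n + d) = (\<Sum>i<d. scale (\<gamma> i) (a (n + i)))"
  shows "\<exists>c. \<forall>n. a (n + t) = (\<Sum>l<d. scale (c l) (a (n + l)))"
proof (induction t rule: less_induct)
  case (less t)
  show ?case
  proof (cases "t < d")
    case True
    have "a (n + t) = (\<Sum>l<d. scale (if l = t then 1 else 0) (a (n + l)))" for n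
      using True by (simp add: if_distrib[of "\<lambda>c. scale c _"] cong: if_cong)
    then show ?thesis by (intro exI allI)
  next
    case False
    then obtain s where t: "t = s + d"
      by (metis add.commute le_add_diff_inverse not_less)
    have "\<forall>i\<in>{..<d}. \<exists>c. \<forall>n. a (n + (s + i)) = (\<Sum>l<d. scale (c l) (a (n + l)))"
      using t by (intro ballI less) auto
    then obtain C where C: "\<And>i n. i < d \<Longrightarrow> a (n + (s + i)) = (\<Sum>l<d. scale (C i l) (a (n + l)))"
      by (metis bchoice lessThan_iff)
    have "a (n + t) = (\<Sum>l<d. scale (\<Sum>i<d. \<gamma> i * C i l) (a (n + l)))" for n
    proof -
      have "a (n + t) = (\<Sum>i<d. scale (\<gamma> i) (a (n + (s + i))))"
        using rec[rule_format, of "n + s"] by (simp add: t ac_simps)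
      also have "\<dots> = (\<Sum>i<d. scale (\<gamma> i) (\<Sum>l<d. scale (C i l) (a (n + l))))"
        by (simp add: C)
      also have "\<dots> = (\<Sum>i<d. \<Sum>l<d. scale (\<gamma> i * C i l) (a (n + l)))"
        by (simp only: scale_sum_right scale_scale)
      also have "\<dots> = (\<Sum>l<d. \<Sum>i<d. scale (\<gamma> i * C i l) (a (n + l)))"
        by (rule sum.swap)
      also have "\<dots> = (\<Sum>l<d. scale (\<Sum>i<d. \<gamma> i * C i l) (a (n + l)))"
        by (simp only: scale_sum_left)
      finally show ?thesis .
    qed
    then show ?thesis by (intro exI allI)
  qed
qed

lemma recurrence_monic_annihilator:
  assumes rec: "\<forall>n. a (n + d) = (\<Sum>i<d. scale (\<gamma> i) (a (n + i)))"
  obtains q where "degree q = d" "coeff q d = 1" "\<And>n. shift_eval scale m q a n = 0"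
proof (cases "d = 0")
  case True
  then show ?thesis
    using rec that[of 1] by (simp add: shift_eval_def)
next
  case False
  obtain c where c: "\<And>t n. a (n + t) = (\<Sum>l<d. scale (c t l) (a (n + l)))"
    using recurrence_shift_combination[OF rec] by metis
  define A where "A = mat d d (\<lambda>(j, l). c (j + m) l)"
  have A: "A \<in> carrier_mat d d"
    by (simp add: A_def)
  have "(\<Sum>l<d. shift_eval scale m (char_poly_matrix A $$ (j, l)) (\<lambda>n. a (n + l)) n) = 0"
    if "j < d" for j n
  proof -
    have "(\<Sum>l<d. shift_eval scale m (char_poly_matrix A $$ (j, l)) (\<lambda>n. a (n + l)) n)
        = (\<Sum>l<d. (if j = l then a (n + m + l) else 0) + scale (- c (j + m) l) (a (n + l)))"
      using that by (intro sum.cong)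
        (simp_all add: A_def char_poly_matrix_def shift_eval_add shift_eval_pCons one_pCons)
    also have "\<dots> = a (n + (j + m)) - (\<Sum>l<d. scale (c (j + m) l) (a (n + l)))"
      using that by (simp add: sum_subtractf scale_minus_left ac_simps)
    also have "\<dots> = 0"
      by (simp add: c[symmetric])
    finally show ?thesis .
  qed
  then have "shift_eval scale m (char_poly A) a n = 0" for n
    using shift_eval_det_annihilates[of "char_poly_matrix A" d m "\<lambda>l n. a (n + l)" 0] A False
    by (simp add: char_poly_def)
  then show ?thesis
    using that degree_monic_char_poly[OF A] by blast
qed

lemma satisfies_rec_of_length_arith_subseq:
  assumes "satisfies_rec_of_length scale a d"
  shows "satisfies_rec_of_length scale (\<lambda>i. a (k + i * m)) d"
proof -
  obtain \<gamma> where rec: "\<forall>n. a (n + d) = (\<Sum>i<d. scale (\<gamma> i) (a (n + i)))"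
    using assms unfolding satisfies_rec_of_length_def by blast
  obtain q where deg: "degree q = d" and monic: "coeff q d = 1"
    and annihilates: "\<And>n. shift_eval scale m q a n = 0"
    using recurrence_monic_annihilator[OF rec] by metis
  have "a (k + (n + d) * m) = (\<Sum>i<d. scale (- coeff q i) (a (k + (n + i) * m)))" for n
  proof -
    have "0 = shift_eval scale m q a (k + n * m)"
      by (simp add: annihilates)
    also have "\<dots> = (\<Sum>i<d. scale (coeff q i) (a (k + (n + i) * m))) + a (k + (n + d) * m)"
      by (simp add: shift_eval_eq_sum_lessThan[where N = "Suc d"] deg monic algebra_simps)
    finally show ?thesis
      by (simp add: scale_minus_left sum_negf eq_neg_iff_add_eq_0 add.commute)
  qed
  then show ?thesis
    unfolding satisfies_rec_of_length_def by (intro exI allI)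
qed

lemma satisfies_rec_of_length_initial_zero:
  assumes "satisfies_rec_of_length scale a d" and "\<forall>j<d. a j = 0"
  shows "a i = 0"
proof -
  obtain \<gamma> where rec: "\<And>n. a (n + d) = (\<Sum>i<d. scale (\<gamma> i) (a (n + i)))"
    using assms(1) unfolding satisfies_rec_of_length_def by blast
  show ?thesis
  proof (induction i rule: less_induct)
    case (less i)
    show ?case
    proof (cases "i < d")
      case True
      then show ?thesis using assms(2) by blast
    next
      case False
      then have "a i = (\<Sum>j<d. scale (\<gamma> j) (a (i - d + j)))"
        using rec[of "i - d"] by simp
      also have "\<dots> = 0"
        using False by (simp add: less)
      finally show ?thesis .
    qed
  qed
qed

end

theorem corollary2p2:
  fixes scale :: "'r::comm_ring_1 \<Rightarrow> 'm::ab_group_add \<Rightarrow> 'm"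
    and a :: "nat \<Rightarrow> 'm" and d k m :: nat
  assumes "module scale"
    and "is_recurrence_of_order scale a d"
    and "m > 0"
    and "\<forall>j<d. a (k + j * m) = 0"
  shows "\<forall>i. a (k + i * m) = 0"
proof
  interpret Modules.module scale by fact
  fix i
  have "satisfies_rec_of_length scale (\<lambda>i. a (k + i * m)) d"
    using assms(2) satisfies_rec_of_length_arith_subseq
    unfolding is_recurrence_of_order_def by blast
  then show "a (k + i * m) = 0"
    using assms(4) by (rule satisfies_rec_of_length_initial_zero)
qed

end
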